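(* Let $\varphi:\mathbb{R}^n\to[0,\infty]$ be a lower semicontinuous convex function with $\varphi(0)=0$, and let $\varphi^\circ(x)=\sup_{y\in\mathbb{R}^n}\frac{\langle x,y\rangle-1}{\varphi(y)}$. Then for every $t>0$, \[ \underline{K}_{1/t}(\varphi)^\circ\subseteq \underline{K}_t(\varphi^\circ)\subseteq 2\,\underline{K}_{1/t}(\varphi)^\circ . \]
   Context: For a function $\psi$ and $s\in\mathbb{R}$, $\underline{K}_s(\psi)=\{x\in\mathbb{R}^n:\psi(x)\le s\}$. For a set $K\subseteq\mathbb{R}^n$, its polar is $K^\circ=\{y\in\mathbb{R}^n:\ \langle x,y\rangle\le 1\ \text{for all } x\in K\}$. In the definition of $\varphi^\circ$ the usual conventions of the $\mathcal{A}$-transform are used: $a/0=+\infty$ if $a>0$, $a/0=0$ if $a\le 0$, and $a/\infty=0$. *)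

theory Defs
  imports "HOL-Analysis.Analysis"
begin

definition ereal_convex :: "('a::real_vector \<Rightarrow> ereal) \<Rightarrow> bool" where
  "ereal_convex f \<longleftrightarrow> convex {(x, s::real). f x \<le> ereal s}"

definition ereal_lsc :: "('a::topological_space \<Rightarrow> ereal) \<Rightarrow> bool" where
  "ereal_lsc f \<longleftrightarrow> (\<forall>x c. c < f x \<longrightarrow> (\<forall>\<^sub>F y in at x. c < f y))"

definition sublevel :: "('a \<Rightarrow> ereal) \<Rightarrow> real \<Rightarrow> 'a set" where
  "sublevel f s = {x. f x \<le> ereal s}"

definition polar :: "'a::real_inner set \<Rightarrow> 'a set" where
  "polar K = {y. \<forall>x\<in>K. inner x y \<le> 1}"

text \<open>Division with the conventions of the A-transform:
  a/0 = +inf if a>0, a/0 = 0 if a<=0, a/inf = 0.\<close>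
definition adiv :: "real \<Rightarrow> ereal \<Rightarrow> ereal" where
  "adiv a b = (if b = 0 then (if a > 0 then \<infinity> else 0)
               else if b = \<infinity> then 0 else ereal (a / real_of_ereal b))"

definition phi_polar :: "('a::real_inner \<Rightarrow> ereal) \<Rightarrow> 'a \<Rightarrow> ereal" where
  "phi_polar f x = (SUP y. adiv (inner x y - 1) (f y))"

end

theory Submission
  imports Defs
begin

text \<open>For \<open>y\<close> with \<open>\<phi> y \<le> 1/t\<close> the bound \<open>\<langle>x,y\<rangle> - 1 \<le> t \<phi> y\<close> gives \<open>\<langle>x,y\<rangle> \<le> 2\<close>,
  which is the second inclusion. For the first, if \<open>\<phi> y = r > 1/t\<close> then convexity and
  \<open>\<phi> 0 = 0\<close> give \<open>\<phi> (y / (t r)) \<le> 1/t\<close>, so \<open>\<langle>x,y\<rangle> \<le> t r\<close> for \<open>x\<close> in the polar.\<close>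

lemma adiv_le_ereal_iff:
  assumes "t > 0" and "b \<ge> 0"
  shows "adiv a b \<le> ereal t \<longleftrightarrow> ereal a \<le> ereal t * b"
proof (cases b)
  case (real r)
  with assms show ?thesis
    by (cases "r = 0") (auto simp: adiv_def divide_le_eq mult.commute)
qed (use assms in \<open>auto simp: adiv_def\<close>)

lemma sublevel_phi_polar_iff:
  assumes "\<And>y. f y \<ge> 0" and "t > 0"
  shows "x \<in> sublevel (phi_polar f) t \<longleftrightarrow> (\<forall>y. ereal (inner x y - 1) \<le> ereal t * f y)"
  using assms by (simp add: sublevel_def phi_polar_def SUP_le_iff adiv_le_ereal_iff)

lemma ereal_convex_scaleR_le:
  fixes f :: "'a::real_vector \<Rightarrow> ereal"
  assumes "ereal_convex f" and "f 0 = 0" and "f y \<le> ereal r" and "0 \<le> l" and "l \<le> 1"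
  shows "f (l *\<^sub>R y) \<le> ereal (l * r)"
proof -
  have "(1 - l) *\<^sub>R (0, 0) + l *\<^sub>R (y, r) \<in> {(x, s::real). f x \<le> ereal s}"
    using assms by (intro convexD[where s = "{(x, s). f x \<le> ereal s}"])
      (auto simp: ereal_convex_def)
  then show ?thesis by simp
qed

lemma inner_le_of_mem_polar_sublevel:
  fixes f :: "'a::real_inner \<Rightarrow> ereal"
  assumes "ereal_convex f" and "f 0 = 0" and "x \<in> polar (sublevel f s)"
    and "f y \<le> ereal r" and "0 < s" and "s \<le> r"
  shows "inner y x \<le> r / s"
proof -
  have "f ((s / r) *\<^sub>R y) \<le> ereal (s / r * r)"
    using assms by (intro ereal_convex_scaleR_le) auto
  then have "(s / r) * inner y x \<le> 1"
    using assms(3,5,6) by (auto simp: polar_def sublevel_def)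
  with assms(5,6) show ?thesis by (simp add: field_simps)
qed

lemma polar_sublevel_subset_sublevel_phi_polar:
  fixes f :: "'a::real_inner \<Rightarrow> ereal"
  assumes nonneg: "\<And>y. f y \<ge> 0" and conv: "ereal_convex f" and zero: "f 0 = 0"
    and "t > 0"
  shows "polar (sublevel f (1 / t)) \<subseteq> sublevel (phi_polar f) t"
proof
  fix x assume x: "x \<in> polar (sublevel f (1 / t))"
  have "inner x y - 1 \<le> t * r" if r: "f y = ereal r" for y r
  proof (cases "r \<le> 1 / t")
    case True
    with x r have "inner y x \<le> 1" by (auto simp: polar_def sublevel_def)
    moreover have "0 \<le> t * r" using nonneg[of y] r \<open>t > 0\<close> by simp
    ultimately show ?thesis by (simp add: inner_commute)
  next
    case False
    with x r \<open>t > 0\<close> have "inner y x \<le> r / (1 / t)"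
      by (intro inner_le_of_mem_polar_sublevel[OF conv zero]) auto
    then show ?thesis by (simp add: inner_commute mult.commute)
  qed
  then have "ereal (inner x y - 1) \<le> ereal t * f y" for y
    using nonneg[of y] \<open>t > 0\<close> by (cases "f y") auto
  with nonneg \<open>t > 0\<close> show "x \<in> sublevel (phi_polar f) t"
    by (simp add: sublevel_phi_polar_iff)
qed

lemma sublevel_phi_polar_subset_scaled_polar:
  fixes f :: "'a::real_inner \<Rightarrow> ereal"
  assumes nonneg: "\<And>y. f y \<ge> 0" and "t > 0"
  shows "sublevel (phi_polar f) t \<subseteq> (\<lambda>x. 2 *\<^sub>R x) ` polar (sublevel f (1 / t))"
proof
  fix x assume "x \<in> sublevel (phi_polar f) t"
  with assms have bound: "ereal (inner x y - 1) \<le> ereal t * f y" for y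
    by (simp add: sublevel_phi_polar_iff)
  have "inner y x \<le> 2" if y: "f y \<le> ereal (1 / t)" for y
  proof -
    obtain r where r: "f y = ereal r" "0 \<le> r" "r \<le> 1 / t"
      using y nonneg[of y] by (cases "f y") auto
    then have "t * r \<le> 1" using \<open>t > 0\<close> by (simp add: field_simps)
    with bound[of y] r show ?thesis by (simp add: inner_commute)
  qed
  then have "(1 / 2) *\<^sub>R x \<in> polar (sublevel f (1 / t))"
    by (auto simp: polar_def sublevel_def)
  then show "x \<in> (\<lambda>x. 2 *\<^sub>R x) ` polar (sublevel f (1 / t))"
    by (rule rev_image_eqI) simp
qed

theorem proposition2p9:
  fixes \<phi> :: "real ^ 'n \<Rightarrow> ereal" and t :: real
  assumes nonneg: "\<And>x. \<phi> x \<ge> 0"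
    and conv: "ereal_convex \<phi>"
    and lsc: "ereal_lsc \<phi>"
    and zero: "\<phi> 0 = 0"
    and tpos: "t > 0"
  shows "polar (sublevel \<phi> (1 / t)) \<subseteq> sublevel (phi_polar \<phi>) t
       \<and> sublevel (phi_polar \<phi>) t \<subseteq> (\<lambda>x. 2 *\<^sub>R x) ` polar (sublevel \<phi> (1 / t))"
  using polar_sublevel_subset_sublevel_phi_polar[of \<phi>, OF nonneg conv zero tpos]
    sublevel_phi_polar_subset_scaled_polar[of \<phi>, OF nonneg tpos]
  by blast

end
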